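(* There exists $r_0>0$ such that $\widehat{M}(r)\neq 0$ for all $r>r_0$, where $\widehat M$ is the function defined in the context.
   Context: For $r>\frac23$ let $u_b(r)\in(\frac65,\frac43)$ be the unique $u\in(\frac65,\frac43)$ with $2-u+2q(1-u)=0$ at $q=1+\sqrt{\frac{r+u-2}{r+0.1}}$. Set $q_{f,\pm}(r)=1\pm\sqrt{\frac{r}{r+0.1}}$, $q_{b,\pm}(r)=1\pm\sqrt{\frac{r+u_b(r)-2}{r+0.1}}$, $S(r)=(q_{f,+}-2q_{f,-})+(q_{b,+}-2q_{b,-})$, and let $(D_0(r),\mu_0(r))$ with $D_0(r)>0$ be the solution of $2+\mu=\tfrac12\sqrt{2D(r+0.1)}\,(q_{f,+}(r)-2q_{f,-}(r))$, $u_b(r)+\mu=-\tfrac12\sqrt{2D(r+0.1)}\,(q_{b,+}(r)-2q_{b,-}(r))$, i.e. $D_0=\frac{2(2-u_b)^2}{(r+0.1)S^2}$, $\mu_0=-2+\frac{(2-u_b)(q_{f,+}-2q_{f,-})}{S}$. Let $\phi(\chi)=\big(1+e^{-\frac{\sqrt2}{2}\chi}\big)^{-1}$, and for $j\in\{f,b\}$ let $\kappa_j=\frac12-\frac{q_{j,-}}{q_{j,+}}$, $I_j=\int_{-\infty}^{\infty}e^{-\sqrt2\kappa_j\chi}\phi'(\chi)^2d\chi$, $J_j^{(m)}=\int_{-\infty}^{\infty}e^{-\sqrt2\kappa_j\chi}\phi'(\chi)\phi(\chi)^m d\chi$ ($m=1,2,3$), all quantities depending on $r$. Define $\widehat M_f=-\frac{q_{f,+}D_0\sqrt2(q_{f,+}-2q_{f,-})}{2(\mu_0+2)}I_f$,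 $M_f=\frac{q_{f,+}}{2}\sqrt2(q_{f,+}-2q_{f,-})I_f+\frac{0.1}{r+0.1}J_f^{(1)}-2q_{f,+}J_f^{(2)}+q_{f,+}^2J_f^{(3)}$, $\widehat M_b=-\frac{q_{b,+}\sqrt2(q_{b,+}-2q_{b,-})}{2(\mu_0+u_b)}I_b$, $M_b=-\frac{q_{b,+}}{2}\sqrt2(q_{b,+}-2q_{b,-})I_b+\frac{u_b-2.1}{r+0.1}J_b^{(1)}+2q_{b,+}J_b^{(2)}-q_{b,+}^2J_b^{(3)}$, and $\widehat M(r)=\frac{M_b(r)}{\widehat M_b(r)}-\frac{M_f(r)}{\widehat M_f(r)}$. ($\widehat M$ is, up to a nonzero factor, the determinant of the Jacobian with respect to $(D,\mu)$ of the Melnikov functions measuring the splitting of the front and back connections in the Barkley traveling-wave system.) *)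

theory Defs
  imports "HOL-Analysis.Analysis"
begin

definition q_b_of :: "real \<Rightarrow> real \<Rightarrow> real" where
  "q_b_of r u = 1 + sqrt ((r + u - 2) / (r + 1/10))"

definition u_b :: "real \<Rightarrow> real" where
  "u_b r = (THE u. 6/5 < u \<and> u < 4/3 \<and> 2 - u + 2 * q_b_of r u * (1 - u) = 0)"

definition qfp :: "real \<Rightarrow> real" where "qfp r = 1 + sqrt (r / (r + 1/10))"
definition qfm :: "real \<Rightarrow> real" where "qfm r = 1 - sqrt (r / (r + 1/10))"
definition qbp :: "real \<Rightarrow> real" where "qbp r = 1 + sqrt ((r + u_b r - 2) / (r + 1/10))"
definition qbm :: "real \<Rightarrow> real" where "qbm r = 1 - sqrt ((r + u_b r - 2) / (r + 1/10))"

definition Sfun :: "real \<Rightarrow> real" where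
  "Sfun r = (qfp r - 2 * qfm r) + (qbp r - 2 * qbm r)"

definition D0 :: "real \<Rightarrow> real" where
  "D0 r = 2 * (2 - u_b r)^2 / ((r + 1/10) * (Sfun r)^2)"

definition mu0 :: "real \<Rightarrow> real" where
  "mu0 r = -2 + (2 - u_b r) * (qfp r - 2 * qfm r) / Sfun r"

definition phi :: "real \<Rightarrow> real" where
  "phi x = inverse (1 + exp (- (sqrt 2 / 2) * x))"

definition phi' :: "real \<Rightarrow> real" where
  "phi' = deriv phi"

definition kappa :: "real \<Rightarrow> real \<Rightarrow> real" where
  "kappa qp qm = 1/2 - qm / qp"

definition Iint :: "real \<Rightarrow> real" where
  "Iint k = (LINT x|lborel. exp (- sqrt 2 * k * x) * (phi' x)^2)"

definition Jint :: "nat \<Rightarrow> real \<Rightarrow> real" where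
  "Jint m k = (LINT x|lborel. exp (- sqrt 2 * k * x) * phi' x * (phi x)^m)"

definition kf :: "real \<Rightarrow> real" where "kf r = kappa (qfp r) (qfm r)"
definition kb :: "real \<Rightarrow> real" where "kb r = kappa (qbp r) (qbm r)"

definition Mhat_f :: "real \<Rightarrow> real" where
  "Mhat_f r = - (qfp r * D0 r * sqrt 2 * (qfp r - 2 * qfm r)) / (2 * (mu0 r + 2)) * Iint (kf r)"

definition M_f :: "real \<Rightarrow> real" where
  "M_f r = qfp r / 2 * sqrt 2 * (qfp r - 2 * qfm r) * Iint (kf r)
         + (1/10) / (r + 1/10) * Jint 1 (kf r)
         - 2 * qfp r * Jint 2 (kf r)
         + (qfp r)^2 * Jint 3 (kf r)"

definition Mhat_b :: "real \<Rightarrow> real" where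
  "Mhat_b r = - (qbp r * sqrt 2 * (qbp r - 2 * qbm r)) / (2 * (mu0 r + u_b r)) * Iint (kb r)"

definition M_b :: "real \<Rightarrow> real" where
  "M_b r = - (qbp r / 2) * sqrt 2 * (qbp r - 2 * qbm r) * Iint (kb r)
         + (u_b r - 21/10) / (r + 1/10) * Jint 1 (kb r)
         + 2 * qbp r * Jint 2 (kb r)
         - (qbp r)^2 * Jint 3 (kb r)"

definition Mhat :: "real \<Rightarrow> real" where
  "Mhat r = M_b r / Mhat_b r - M_f r / Mhat_f r"

end

theory Submission
  imports Defs "HOL-Real_Asymp.Real_Asymp"
begin

text \<open>
  Substituting \<open>s = phi x\<close>, the weight \<open>exp (- sqrt 2 * k * x)\<close> becomes
  \<open>phi x powr (- 2 * k) * (1 - phi x) powr (2 * k)\<close>, so \<open>Iint k\<close> and \<open>Jint m k\<close> are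
  Beta values. The Beta recurrence makes \<open>Iint k\<close>, \<open>Jint 2 k\<close> and \<open>Jint 3 k\<close> explicit
  multiples of \<open>Jint 1 k > 0\<close>, which therefore cancels from \<open>M_b / Mhat_b\<close> and
  \<open>M_f / Mhat_f\<close>. As \<open>r \<rightarrow> \<infinity>\<close>, \<open>qfp, qbp \<rightarrow> 2\<close>, \<open>qfm, qbm \<rightarrow> 0\<close>, \<open>u_b \<rightarrow> 6/5\<close>,
  \<open>kf, kb \<rightarrow> 1/2\<close>, \<open>mu0 \<rightarrow> -8/5\<close> and \<open>(r + 1/10) * D0 r \<rightarrow> 2/25\<close>. Hence
  \<open>M_b / Mhat_b \<rightarrow> -1/5\<close>, while \<open>M_f / Mhat_f\<close> behaves like \<open>-5r/2\<close>, so \<open>Mhat r \<rightarrow> \<infinity>\<close>.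
\<close>

section \<open>The logistic function and Beta integrals\<close>

definition logistic :: "real \<Rightarrow> real \<Rightarrow> real" where
  "logistic c x = inverse (1 + exp (- c * x))"

definition logit :: "real \<Rightarrow> real \<Rightarrow> real" where
  "logit c s = ln (s / (1 - s)) / c"

lemma logistic_gt_0: "0 < logistic c x"
  unfolding logistic_def by (simp add: add_pos_pos)

lemma logistic_less_1: "logistic c x < 1"
  unfolding logistic_def by (simp add: inverse_less_1_iff add_pos_pos)

lemma logistic_odds: "(1 - logistic c x) / logistic c x = exp (- c * x)"
proof -
  have "0 < 1 + exp (- c * x)" by (simp add: add_pos_pos)
  then show ?thesis unfolding logistic_def by (simp add: field_simps)
qed

lemma has_real_derivative_logistic:
  "(logistic c has_real_derivative c * logistic c x * (1 - logistic c x)) (at x)"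
proof -
  have pos: "0 < 1 + exp (- c * x)"
    by (simp add: add_pos_pos)
  have "(logistic c has_real_derivative c * exp (- c * x) / (1 + exp (- c * x))\<^sup>2) (at x)"
    unfolding logistic_def[abs_def] using pos
    by (auto intro!: derivative_eq_intros simp: power2_eq_square field_simps)
  moreover have "c * exp (- c * x) / (1 + exp (- c * x))\<^sup>2 = c * logistic c x * (1 - logistic c x)"
    unfolding logistic_def using pos by (simp add: power2_eq_square field_simps)
  ultimately show ?thesis by simp
qed

lemma logistic_logit:
  assumes "c \<noteq> 0" "0 < s" "s < 1"
  shows "logistic c (logit c s) = s"
  using assms by (simp add: logistic_def logit_def exp_minus field_simps)

lemma has_real_derivative_logit:
  assumes "0 < s" "s < 1"
  shows "(logit c has_real_derivative 1 / (c * s * (1 - s))) (at s)"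
proof -
  have "((\<lambda>s. s / (1 - s)) has_real_derivative 1 / (1 - s)\<^sup>2) (at s)"
    using assms by (auto intro!: derivative_eq_intros simp: power2_eq_square field_simps)
  moreover have "(ln has_real_derivative 1 / (s / (1 - s))) (at (s / (1 - s)))"
    using assms by (intro DERIV_ln_divide) simp
  ultimately have "(logit c has_real_derivative (1 / (s / (1 - s))) * (1 / (1 - s)\<^sup>2) / c) (at s)"
    unfolding logit_def[abs_def] by (intro DERIV_cdivide DERIV_chain2)
  moreover have "(1 / (s / (1 - s))) * (1 / (1 - s)\<^sup>2) / c = 1 / (c * s * (1 - s))"
  proof -
    have "(1 / (s / (1 - s))) * (1 / (1 - s)\<^sup>2) = 1 / (s * (1 - s))"
      using assms by (simp add: power2_eq_square)
    then show ?thesis by (simp add: mult_ac)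
  qed
  ultimately show ?thesis by (rule DERIV_cong)
qed

lemma exp_eq_logistic_powr:
  "exp (- 2 * c * k * x) = logistic c x powr (- 2 * k) * (1 - logistic c x) powr (2 * k)"
proof -
  have "logistic c x powr (- 2 * k) * (1 - logistic c x) powr (2 * k)
      = (1 - logistic c x) powr (2 * k) / logistic c x powr (2 * k)"
    by (simp add: powr_minus divide_inverse mult.commute)
  also have "\<dots> = ((1 - logistic c x) / logistic c x) powr (2 * k)"
    using logistic_gt_0[of c x] logistic_less_1[of c x] by (simp add: powr_divide)
  also have "\<dots> = exp (- 2 * c * k * x)"
    unfolding logistic_odds exp_powr_real by (simp add: algebra_simps)
  finally show ?thesis by simp
qed

lemma exp_mult_logistic_powers:
  "exp (- 2 * c * k * x) * logistic c x ^ m * (1 - logistic c x) ^ n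
     = logistic c x powr (real m - 2 * k) * (1 - logistic c x) powr (real n + 2 * k)"
proof -
  have "0 < logistic c x" "0 < 1 - logistic c x"
    using logistic_gt_0 logistic_less_1 by (auto simp: less_diff_eq)
  then have "logistic c x powr (real m - 2 * k) = logistic c x powr (- 2 * k) * logistic c x ^ m"
        and "(1 - logistic c x) powr (real n + 2 * k) = (1 - logistic c x) powr (2 * k) * (1 - logistic c x) ^ n"
    by (simp_all add: powr_add [symmetric] powr_realpow [symmetric] algebra_simps)
  then show ?thesis
    unfolding exp_eq_logistic_powr by (simp add: mult_ac)
qed

lemma logit_at_bot: "0 < c \<Longrightarrow> filterlim (logit c) at_bot (at_right 0)"
  unfolding logit_def by real_asymp

lemma logit_at_top: "0 < c \<Longrightarrow> filterlim (logit c) at_top (at_left 1)"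
  unfolding logit_def by real_asymp

lemma interval_integral_Beta:
  assumes "0 < a" "0 < b"
  shows "set_integrable lborel (einterval 0 1) (\<lambda>t. t powr (a - 1) * (1 - t) powr (b - 1))"
    and "(LBINT t=0..1. t powr (a - 1) * (1 - t) powr (b - 1)) = Beta a b"
proof -
  have int: "set_integrable lborel {0..1} (\<lambda>t. t powr (a - 1) * (1 - t) powr (b - 1))"
    using integrable_Beta[OF assms] .
  then show "set_integrable lborel (einterval 0 1) (\<lambda>t. t powr (a - 1) * (1 - t) powr (b - 1))"
    by (rule set_integrable_subset) (auto simp: zero_ereal_def one_ereal_def)
  have "(LBINT t=0..1. t powr (a - 1) * (1 - t) powr (b - 1))
      = integral {0..1} (\<lambda>t. t powr (a - 1) * (1 - t) powr (b - 1))"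
    using interval_integral_eq_integral[OF _ int] by (simp add: zero_ereal_def one_ereal_def)
  also have "\<dots> = Beta a b"
    using has_integral_Beta_real[OF assms] by (rule integral_unique)
  finally show "(LBINT t=0..1. t powr (a - 1) * (1 - t) powr (b - 1)) = Beta a b" .
qed

lemma integral_logit_substitution:
  fixes f :: "real \<Rightarrow> real"
  assumes "0 < c" and cont_f: "\<And>x. isCont f x" and f_nonneg: "\<And>x. 0 \<le> f x"
    and int: "set_integrable lborel (einterval 0 1) (\<lambda>s. f (logit c s) / (c * s * (1 - s)))"
  shows "integrable lborel f"
    and "(LINT x|lborel. f x) = (LBINT s=0..1. f (logit c s) / (c * s * (1 - s)))"
proof -
  have in_01: "0 < s \<and> s < 1" if "0 < ereal s" "ereal s < 1" for s
    using that by (simp add: zero_ereal_def one_ereal_def)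
  have deriv: "(logit c has_real_derivative 1 / (c * s * (1 - s))) (at s)"
    if "0 < ereal s" "ereal s < 1" for s
    using in_01[OF that] by (intro has_real_derivative_logit) auto
  have cont_deriv: "isCont (\<lambda>s. 1 / (c * s * (1 - s))) s" if "0 < ereal s" "ereal s < 1" for s
    using assms(1) in_01[OF that] by (intro continuous_intros) auto
  have deriv_nonneg: "0 \<le> 1 / (c * s * (1 - s))" if "0 \<le> ereal s" "ereal s \<le> 1" for s
    using assms(1) that by (simp add: zero_ereal_def one_ereal_def)
  have lim_0: "((ereal \<circ> logit c \<circ> real_of_ereal) \<longlongrightarrow> - \<infinity>) (at_right 0)"
    unfolding zero_ereal_def using logit_at_bot[OF assms(1)]
    by (simp add: ereal_tendsto_simps flip: comp_assoc)
  have lim_1: "((ereal \<circ> logit c \<circ> real_of_ereal) \<longlongrightarrow> \<infinity>) (at_left 1)"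
    unfolding one_ereal_def using logit_at_top[OF assms(1)]
    by (simp add: ereal_tendsto_simps flip: comp_assoc)
  have "set_integrable lborel (einterval 0 1) (\<lambda>s. f (logit c s) * (1 / (c * s * (1 - s))))"
    using int by simp
  note substitution = interval_integral_substitution_nonneg[of 0 1,
      OF _ deriv cont_f cont_deriv f_nonneg deriv_nonneg lim_0 lim_1 this, simplified]
  show "integrable lborel f"
    using substitution(1) by (simp add: set_integrable_def)
  show "(LINT x|lborel. f x) = (LBINT s=0..1. f (logit c s) / (c * s * (1 - s)))"
    using substitution(2) by (simp add: interval_lebesgue_integral_def set_lebesgue_integral_def)
qed

theorem integral_logistic_powr:
  assumes "0 < c" "0 < a" "0 < b"
  defines "f \<equiv> \<lambda>x. logistic c x powr a * (1 - logistic c x) powr b"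
  shows "integrable lborel f" and "(LINT x|lborel. f x) = Beta a b / c"
proof -
  define B where "B t = t powr (a - 1) * (1 - t) powr (b - 1)" for t
  have subst: "f (logit c s) / (c * s * (1 - s)) = B s / c" if "0 < s" "s < 1" for s
  proof -
    have "f (logit c s) / (c * s * (1 - s)) = (s powr a / s) * ((1 - s) powr b / (1 - s)) / c"
      using logistic_logit[of c s] assms(1) that by (simp add: f_def mult_ac)
    also have "\<dots> = B s / c"
      unfolding B_def using that by (simp add: powr_diff)
    finally show ?thesis .
  qed
  have "set_integrable lborel (einterval 0 1) (\<lambda>s. B s / c)"
    using interval_integral_Beta(1)[OF assms(2,3)] unfolding B_def by (rule set_integrable_divide)
  moreover have "set_integrable lborel (einterval 0 1) (\<lambda>s. f (logit c s) / (c * s * (1 - s)))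
      = set_integrable lborel (einterval 0 1) (\<lambda>s. B s / c)"
    by (rule set_integrable_cong) (auto simp: subst zero_ereal_def one_ereal_def)
  ultimately have int: "set_integrable lborel (einterval 0 1) (\<lambda>s. f (logit c s) / (c * s * (1 - s)))"
    by simp
  have cont_f: "isCont f x" for x
    unfolding f_def using logistic_gt_0[of c x] logistic_less_1[of c x]
    by (intro continuous_intros DERIV_isCont[OF has_real_derivative_logistic]) auto
  have f_nonneg: "0 \<le> f x" for x
    unfolding f_def by simp
  note substitution = integral_logit_substitution[OF assms(1) cont_f f_nonneg int]
  show "integrable lborel f"
    by (rule substitution(1))
  have "(LINT x|lborel. f x) = (LBINT s=0..1. B s / c)"
    unfolding substitution(2)
    by (rule interval_integral_cong) (auto simp: subst zero_ereal_def one_ereal_def)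
  also have "\<dots> = Beta a b / c"
    using interval_integral_Beta(2)[OF assms(2,3)] unfolding B_def by simp
  finally show "(LINT x|lborel. f x) = Beta a b / c" .
qed

section \<open>The weighted moments \<open>Iint\<close> and \<open>Jint\<close>\<close>

lemma phi_eq_logistic: "phi = logistic (sqrt 2 / 2)"
  by (simp add: fun_eq_iff phi_def logistic_def)

lemma phi'_eq: "phi' x = sqrt 2 / 2 * phi x * (1 - phi x)"
  unfolding phi'_def phi_eq_logistic by (rule DERIV_imp_deriv[OF has_real_derivative_logistic])

lemma Beta_pos: "0 < a \<Longrightarrow> 0 < b \<Longrightarrow> 0 < Beta a (b :: real)"
  unfolding Beta_def by (simp add: add_pos_pos)

lemma Jint_eq_Beta:
  assumes "-1 < 2 * k" "2 * k < real m + 1"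
  shows "Jint m k = Beta (real m + 1 - 2 * k) (1 + 2 * k)"
proof -
  have integrand: "exp (- sqrt 2 * k * x) * phi' x * phi x ^ m
      = sqrt 2 / 2 * (phi x powr (real m + 1 - 2 * k) * (1 - phi x) powr (1 + 2 * k))" for x
    using exp_mult_logistic_powers[of "sqrt 2 / 2" k x "Suc m" 1]
    unfolding phi'_eq phi_eq_logistic by (simp add: mult_ac add_ac)
  have "Jint m k = sqrt 2 / 2 * (LINT x|lborel. phi x powr (real m + 1 - 2 * k) * (1 - phi x) powr (1 + 2 * k))"
    unfolding Jint_def integrand by simp
  also have "\<dots> = Beta (real m + 1 - 2 * k) (1 + 2 * k)"
    unfolding phi_eq_logistic using assms by (subst integral_logistic_powr(2)) auto
  finally show ?thesis .
qed

lemma Iint_eq_Beta: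
  assumes "-1 < k" "k < 1"
  shows "Iint k = sqrt 2 / 2 * Beta (2 - 2 * k) (2 + 2 * k)"
proof -
  have integrand: "exp (- sqrt 2 * k * x) * (phi' x)\<^sup>2
      = (sqrt 2 / 2)\<^sup>2 * (phi x powr (2 - 2 * k) * (1 - phi x) powr (2 + 2 * k))" for x
  proof -
    have "(phi' x)\<^sup>2 = (sqrt 2 / 2)\<^sup>2 * ((phi x)\<^sup>2 * (1 - phi x)\<^sup>2)"
      unfolding phi'_eq power_mult_distrib by (rule mult.assoc)
    then show ?thesis
      using exp_mult_logistic_powers[of "sqrt 2 / 2" k x 2 2]
      unfolding phi_eq_logistic by (simp add: mult_ac add_ac)
  qed
  have "Iint k = (sqrt 2 / 2)\<^sup>2 * (LINT x|lborel. phi x powr (2 - 2 * k) * (1 - phi x) powr (2 + 2 * k))"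
    unfolding Iint_def integrand by simp
  also have "\<dots> = (sqrt 2 / 2)\<^sup>2 * (Beta (2 - 2 * k) (2 + 2 * k) / (sqrt 2 / 2))"
    unfolding phi_eq_logistic using assms by (subst integral_logistic_powr(2)) auto
  also have "\<dots> = sqrt 2 / 2 * Beta (2 - 2 * k) (2 + 2 * k)"
    by (simp add: power2_eq_square field_simps)
  finally show ?thesis .
qed

lemma Jint_pos: "-1 < 2 * k \<Longrightarrow> 2 * k < real m + 1 \<Longrightarrow> 0 < Jint m k"
  by (simp add: Jint_eq_Beta Beta_pos)

lemma Jint_Suc:
  assumes "-1 < 2 * k" "2 * k < real m + 1"
  shows "Jint (Suc m) k = (real m + 1 - 2 * k) / (real m + 2) * Jint m k"
proof -
  have "real m + 1 - 2 * k \<notin> \<int>\<^sub>\<le>\<^sub>0"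
    using assms by auto
  from Beta_plus1_left[OF this, of "1 + 2 * k"]
  have "(real m + 2) * Beta (real m + 2 - 2 * k) (1 + 2 * k)
      = (real m + 1 - 2 * k) * Beta (real m + 1 - 2 * k) (1 + 2 * k)"
    by (simp add: algebra_simps)
  then show ?thesis
    using assms by (simp add: Jint_eq_Beta field_simps)
qed

lemma Jint_2_eq_Jint_1: "-1 < 2 * k \<Longrightarrow> k < 1 \<Longrightarrow> Jint 2 k = (2 - 2 * k) / 3 * Jint 1 k"
  using Jint_Suc [of k 1] by (simp add: numeral_2_eq_2)

lemma Jint_3_eq_Jint_2: "-1 < 2 * k \<Longrightarrow> 2 * k < 3 \<Longrightarrow> Jint 3 k = (3 - 2 * k) / 4 * Jint 2 k"
  using Jint_Suc [of k 2] by (simp add: numeral_3_eq_3 numeral_2_eq_2)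

lemma Iint_eq_Jint_1:
  assumes "-1 < 2 * k" "k < 1"
  shows "Iint k = sqrt 2 / 2 * ((1 + 2 * k) / 3) * Jint 1 k"
proof -
  have "1 + 2 * k \<notin> \<int>\<^sub>\<le>\<^sub>0"
    using assms by auto
  from Beta_plus1_right[OF this, of "2 - 2 * k"]
  have "Beta (2 - 2 * k) (2 + 2 * k) = (1 + 2 * k) / 3 * Beta (2 - 2 * k) (1 + 2 * k)"
    by (simp add: algebra_simps)
  then show ?thesis
    using assms by (simp add: Iint_eq_Beta Jint_eq_Beta)
qed

lemma tendsto_Jint_ratios:
  assumes "(k \<longlongrightarrow> 1 / 2) F"
  shows "\<forall>\<^sub>F r in F. 0 < Jint 1 (k r)"
    and "((\<lambda>r. Iint (k r) / Jint 1 (k r)) \<longlongrightarrow> sqrt 2 / 3) F"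
    and "((\<lambda>r. Jint 2 (k r) / Jint 1 (k r)) \<longlongrightarrow> 1 / 3) F"
    and "((\<lambda>r. Jint 3 (k r) / Jint 1 (k r)) \<longlongrightarrow> 1 / 6) F"
proof -
  have "\<forall>\<^sub>F r in F. -1 / 2 < k r"
    by (rule order_tendstoD(1)[OF assms]) simp
  moreover have "\<forall>\<^sub>F r in F. k r < 1"
    by (rule order_tendstoD(2)[OF assms]) simp
  ultimately have in_range: "\<forall>\<^sub>F r in F. -1 < 2 * k r \<and> k r < 1"
    by eventually_elim simp
  then show "\<forall>\<^sub>F r in F. 0 < Jint 1 (k r)"
    by eventually_elim (simp add: Jint_pos)
  from in_range have ratios: "\<forall>\<^sub>F r in F.
      Iint (k r) / Jint 1 (k r) = sqrt 2 / 2 * ((1 + 2 * k r) / 3) \<and>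
      Jint 2 (k r) / Jint 1 (k r) = (2 - 2 * k r) / 3 \<and>
      Jint 3 (k r) / Jint 1 (k r) = (3 - 2 * k r) / 4 * ((2 - 2 * k r) / 3)"
  proof eventually_elim
    case (elim r)
    then have "Jint 1 (k r) \<noteq> 0"
      using Jint_pos[of "k r" 1] by simp
    with elim show ?case
      by (simp add: Iint_eq_Jint_1 Jint_2_eq_Jint_1 Jint_3_eq_Jint_2)
  qed
  have "((\<lambda>r. sqrt 2 / 2 * ((1 + 2 * k r) / 3)) \<longlongrightarrow> sqrt 2 / 3) F"
    by (rule tendsto_eq_intros assms refl | simp)+
  then show "((\<lambda>r. Iint (k r) / Jint 1 (k r)) \<longlongrightarrow> sqrt 2 / 3) F"
    by (rule Lim_transform_eventually) (use ratios in \<open>auto elim: eventually_mono\<close>)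
  have "((\<lambda>r. (2 - 2 * k r) / 3) \<longlongrightarrow> 1 / 3) F"
    by (rule tendsto_eq_intros assms refl | simp)+
  then show "((\<lambda>r. Jint 2 (k r) / Jint 1 (k r)) \<longlongrightarrow> 1 / 3) F"
    by (rule Lim_transform_eventually) (use ratios in \<open>auto elim: eventually_mono\<close>)
  have "((\<lambda>r. (3 - 2 * k r) / 4 * ((2 - 2 * k r) / 3)) \<longlongrightarrow> 1 / 6) F"
    by (rule tendsto_eq_intros assms refl | simp)+
  then show "((\<lambda>r. Jint 3 (k r) / Jint 1 (k r)) \<longlongrightarrow> 1 / 6) F"
    by (rule Lim_transform_eventually) (use ratios in \<open>auto elim: eventually_mono\<close>)
qed

section \<open>The back state \<open>u_b\<close>\<close>

lemma q_b_of_mono: "-1/10 < r \<Longrightarrow> u \<le> v \<Longrightarrow> q_b_of r u \<le> q_b_of r v"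
  unfolding q_b_of_def by (simp add: divide_right_mono)

lemma q_b_of_pos:
  assumes "2/3 < r" "1 \<le> u"
  shows "0 < q_b_of r u"
proof -
  \<comment> \<open>The radicand may be negative; HOL's \<open>sqrt\<close> is odd, so \<open>sqrt x > -1\<close> iff \<open>x > -1\<close>.\<close>
  have "-1 < (r + u - 2) / (r + 1/10)"
    using assms by (simp add: field_simps)
  then have "-1 < sqrt ((r + u - 2) / (r + 1/10))"
    using real_sqrt_less_iff[of "-1" "(r + u - 2) / (r + 1/10)"] by (simp add: real_sqrt_minus)
  then show ?thesis
    unfolding q_b_of_def by simp
qed

lemma back_balance_strict_antimono:
  assumes "2/3 < r" "1 \<le> u" "u < v"
  shows "2 - v + 2 * q_b_of r v * (1 - v) < 2 - u + 2 * q_b_of r u * (1 - u)"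
proof -
  have "q_b_of r v * (1 - v) \<le> q_b_of r u * (1 - v)"
    using assms q_b_of_mono[of r u v] by (intro mult_right_mono_neg) auto
  also have "\<dots> < q_b_of r u * (1 - u)"
    using assms q_b_of_pos[of r u] by (intro mult_strict_left_mono) auto
  finally show ?thesis
    using assms by simp
qed

lemma u_b_unique:
  assumes "2/3 < r"
  shows "\<exists>!u. 6/5 < u \<and> u < 4/3 \<and> 2 - u + 2 * q_b_of r u * (1 - u) = 0"
proof -
  define h where "h u = 2 - u + 2 * q_b_of r u * (1 - u)" for u
  have "(r + 6/5 - 2) / (r + 1/10) < 1" and "0 < (r + 4/3 - 2) / (r + 1/10)"
    using assms by (simp_all add: field_simps)
  then have "q_b_of r (6/5) < 2" and "1 < q_b_of r (4/3)"
    unfolding q_b_of_def by simp_all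
  then have h_left: "0 < h (6/5)" and h_right: "h (4/3) < 0"
    unfolding h_def by simp_all
  have "\<forall>u. 6/5 \<le> u \<and> u \<le> 4/3 \<longrightarrow> isCont h u"
    unfolding h_def q_b_of_def using assms by (intro allI impI continuous_intros) auto
  then obtain u where u: "6/5 \<le> u" "u \<le> 4/3" "h u = 0"
    using IVT2[of h "4/3" 0 "6/5"] h_left h_right by auto
  moreover have "u \<noteq> 6/5" "u \<noteq> 4/3"
    using u(3) h_left h_right by (metis less_irrefl)+
  ultimately have "6/5 < u \<and> u < 4/3 \<and> h u = 0"
    by auto
  moreover have "v = u" if "6/5 < v" "v < 4/3" "h v = 0" for v
    using back_balance_strict_antimono[OF assms, of u v] back_balance_strict_antimono[OF assms, of v u]
      that u unfolding h_def by (cases u v rule: linorder_cases) auto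
  ultimately show ?thesis
    unfolding h_def by blast
qed

lemma u_b:
  assumes "2/3 < r"
  shows u_b_bounds: "6/5 < u_b r" "u_b r < 4/3"
    and u_b_balance: "2 - u_b r + 2 * q_b_of r (u_b r) * (1 - u_b r) = 0"
  using theI'[OF u_b_unique[OF assms]] unfolding u_b_def[symmetric] by auto

lemma qbp_eq_q_b_of: "qbp r = q_b_of r (u_b r)"
  unfolding qbp_def q_b_of_def ..

lemma u_b_eq_qbp:
  assumes "2/3 < r"
  shows "u_b r = (2 + 2 * qbp r) / (1 + 2 * qbp r)"
proof -
  have "0 < qbp r"
    unfolding qbp_eq_q_b_of using assms u_b_bounds[OF assms] by (intro q_b_of_pos) auto
  moreover have "u_b r * (1 + 2 * qbp r) = 2 + 2 * qbp r"
    using u_b_balance[OF assms] unfolding qbp_eq_q_b_of[symmetric] by (simp add: algebra_simps)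
  ultimately show ?thesis
    by (simp add: field_simps)
qed

section \<open>Asymptotics as \<open>r \<rightarrow> \<infinity>\<close>\<close>

lemma tendsto_qfp: "(qfp \<longlongrightarrow> 2) at_top"
  unfolding qfp_def by real_asymp

lemma tendsto_qfm: "(qfm \<longlongrightarrow> 0) at_top"
  unfolding qfm_def by real_asymp

lemma tendsto_qbp: "(qbp \<longlongrightarrow> 2) at_top"
proof (rule tendsto_sandwich)
  show "\<forall>\<^sub>F r in at_top. q_b_of r (6/5) \<le> qbp r"
  proof (rule eventually_mono[OF eventually_gt_at_top[of "2/3"]])
    show "q_b_of r (6/5) \<le> qbp r" if "2/3 < r" for r
      using q_b_of_mono[of r "6/5" "u_b r"] u_b_bounds[OF that] that by (simp add: qbp_eq_q_b_of)
  qed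
  show "\<forall>\<^sub>F r in at_top. qbp r \<le> q_b_of r (4/3)"
  proof (rule eventually_mono[OF eventually_gt_at_top[of "2/3"]])
    show "qbp r \<le> q_b_of r (4/3)" if "2/3 < r" for r
      using q_b_of_mono[of r "u_b r" "4/3"] u_b_bounds[OF that] that by (simp add: qbp_eq_q_b_of)
  qed
  show "((\<lambda>r. q_b_of r (6/5)) \<longlongrightarrow> 2) at_top" "((\<lambda>r. q_b_of r (4/3)) \<longlongrightarrow> 2) at_top"
    unfolding q_b_of_def by real_asymp+
qed

lemma tendsto_qbm: "(qbm \<longlongrightarrow> 0) at_top"
proof -
  have "qbm = (\<lambda>r. 2 - qbp r)"
    by (simp add: fun_eq_iff qbm_def qbp_def)
  then show ?thesis
    using tendsto_diff[OF tendsto_const tendsto_qbp, of 2] by simp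
qed

lemma tendsto_u_b: "(u_b \<longlongrightarrow> 6/5) at_top"
proof (rule Lim_transform_eventually)
  show "((\<lambda>r. (2 + 2 * qbp r) / (1 + 2 * qbp r)) \<longlongrightarrow> 6/5) at_top"
    by (rule tendsto_eq_intros tendsto_qbp refl | simp)+
  show "\<forall>\<^sub>F r in at_top. (2 + 2 * qbp r) / (1 + 2 * qbp r) = u_b r"
    using eventually_gt_at_top[of "2/3"] by eventually_elim (simp add: u_b_eq_qbp)
qed

lemma tendsto_kf: "(kf \<longlongrightarrow> 1/2) at_top"
  unfolding kf_def[abs_def] kappa_def
  by (rule tendsto_eq_intros tendsto_qfp tendsto_qfm refl | simp)+

lemma tendsto_kb: "(kb \<longlongrightarrow> 1/2) at_top"
  unfolding kb_def[abs_def] kappa_def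
  by (rule tendsto_eq_intros tendsto_qbp tendsto_qbm refl | simp)+

lemma tendsto_Sfun: "(Sfun \<longlongrightarrow> 4) at_top"
  unfolding Sfun_def[abs_def]
  by (rule tendsto_eq_intros tendsto_qfp tendsto_qfm tendsto_qbp tendsto_qbm refl | simp)+

lemma tendsto_mu0: "(mu0 \<longlongrightarrow> -8/5) at_top"
  unfolding mu0_def[abs_def]
  by (rule tendsto_eq_intros tendsto_qfp tendsto_qfm tendsto_u_b tendsto_Sfun refl | simp)+

lemma tendsto_scaled_D0: "((\<lambda>r. (r + 1/10) * D0 r) \<longlongrightarrow> 2/25) at_top"
proof (rule Lim_transform_eventually)
  show "((\<lambda>r. 2 * (2 - u_b r)\<^sup>2 / (Sfun r)\<^sup>2) \<longlongrightarrow> 2/25) at_top"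
    by (rule tendsto_eq_intros tendsto_u_b tendsto_Sfun refl | simp add: power2_eq_square)+
  show "\<forall>\<^sub>F r in at_top. 2 * (2 - u_b r)\<^sup>2 / (Sfun r)\<^sup>2 = (r + 1/10) * D0 r"
    using eventually_gt_at_top[of 0] by eventually_elim (simp add: D0_def)
qed

lemma tendsto_M_b_over_Mhat_b: "((\<lambda>r. M_b r / Mhat_b r) \<longlongrightarrow> -1/5) at_top"
proof -
  note ratios = tendsto_Jint_ratios[OF tendsto_kb]
  define N where "N r = - (qbp r / 2) * sqrt 2 * (qbp r - 2 * qbm r) * (Iint (kb r) / Jint 1 (kb r))
      + (u_b r - 21/10) / (r + 1/10) + 2 * qbp r * (Jint 2 (kb r) / Jint 1 (kb r))
      - (qbp r)\<^sup>2 * (Jint 3 (kb r) / Jint 1 (kb r))" for r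
  define D where "D r = - (qbp r * sqrt 2 * (qbp r - 2 * qbm r)) / (2 * (mu0 r + u_b r))
      * (Iint (kb r) / Jint 1 (kb r))" for r
  have "N r / D r = M_b r / Mhat_b r" if "Jint 1 (kb r) \<noteq> 0" for r
  proof -
    have "N r = M_b r / Jint 1 (kb r)" "D r = Mhat_b r / Jint 1 (kb r)"
      unfolding N_def D_def M_b_def Mhat_b_def using that
      by (simp_all add: add_divide_distrib diff_divide_distrib)
    with that show ?thesis
      by simp
  qed
  with ratios(1) have eq: "\<forall>\<^sub>F r in at_top. N r / D r = M_b r / Mhat_b r"
    by (auto elim: eventually_mono)
  have vanishing: "((\<lambda>r. (u_b r - 21/10) / (r + 1/10)) \<longlongrightarrow> 0) at_top"
    by (rule tendsto_divide_0[OF tendsto_diff[OF tendsto_u_b tendsto_const]])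
      (rule filterlim_at_top_imp_at_infinity, real_asymp)
  have lim_N: "(N \<longlongrightarrow> -2/3) at_top"
    unfolding N_def[abs_def]
    by (rule vanishing tendsto_eq_intros tendsto_qbp tendsto_qbm ratios(2-4) refl | simp add: power2_eq_square)+
  have lim_D: "(D \<longlongrightarrow> 10/3) at_top"
    unfolding D_def[abs_def]
    by (rule tendsto_eq_intros tendsto_qbp tendsto_qbm tendsto_mu0 tendsto_u_b ratios(2) refl | simp)+
  have "((\<lambda>r. N r / D r) \<longlongrightarrow> -1/5) at_top"
    using tendsto_divide[OF lim_N lim_D] by simp
  then show ?thesis
    using eq by (rule Lim_transform_eventually)
qed

lemma tendsto_M_f_over_Mhat_f: "((\<lambda>r. M_f r / ((r + 1/10) * Mhat_f r)) \<longlongrightarrow> -5/2) at_top"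
proof -
  note ratios = tendsto_Jint_ratios[OF tendsto_kf]
  define N where "N r = qfp r / 2 * sqrt 2 * (qfp r - 2 * qfm r) * (Iint (kf r) / Jint 1 (kf r))
      + (1/10) / (r + 1/10) - 2 * qfp r * (Jint 2 (kf r) / Jint 1 (kf r))
      + (qfp r)\<^sup>2 * (Jint 3 (kf r) / Jint 1 (kf r))" for r
  define D where "D r = - (qfp r * ((r + 1/10) * D0 r) * sqrt 2 * (qfp r - 2 * qfm r)) / (2 * (mu0 r + 2))
      * (Iint (kf r) / Jint 1 (kf r))" for r
  have "N r / D r = M_f r / ((r + 1/10) * Mhat_f r)" if "Jint 1 (kf r) \<noteq> 0" for r
  proof -
    have "N r = M_f r / Jint 1 (kf r)" "D r = (r + 1/10) * Mhat_f r / Jint 1 (kf r)"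
      unfolding N_def D_def M_f_def Mhat_f_def using that
      by (simp_all add: add_divide_distrib diff_divide_distrib mult_ac)
    with that show ?thesis
      by simp
  qed
  with ratios(1) have eq: "\<forall>\<^sub>F r in at_top. N r / D r = M_f r / ((r + 1/10) * Mhat_f r)"
    by (auto elim: eventually_mono)
  have vanishing: "((\<lambda>r::real. (1/10) / (r + 1/10)) \<longlongrightarrow> 0) at_top"
    by real_asymp
  have lim_N: "(N \<longlongrightarrow> 2/3) at_top"
    unfolding N_def[abs_def]
    by (rule vanishing tendsto_eq_intros tendsto_qfp tendsto_qfm ratios(2-4) refl | simp add: power2_eq_square)+
  have lim_D: "(D \<longlongrightarrow> -4/15) at_top"
    unfolding D_def[abs_def]
    by (rule tendsto_eq_intros tendsto_qfp tendsto_qfm tendsto_mu0 tendsto_scaled_D0 ratios(2) refl | simp)+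
  have "((\<lambda>r. N r / D r) \<longlongrightarrow> -5/2) at_top"
    using tendsto_divide[OF lim_N lim_D] by simp
  then show ?thesis
    using eq by (rule Lim_transform_eventually)
qed

lemma Mhat_at_top: "filterlim Mhat at_top at_top"
proof -
  have "filterlim (\<lambda>r. M_b r / Mhat_b r + (- (M_f r / ((r + 1/10) * Mhat_f r))) * (r + 1/10))
      at_top at_top"
    by (intro filterlim_tendsto_add_at_top[OF tendsto_M_b_over_Mhat_b]
        filterlim_tendsto_pos_mult_at_top[OF tendsto_minus[OF tendsto_M_f_over_Mhat_f]])
      (simp, real_asymp)
  moreover have "\<forall>\<^sub>F r in at_top.
      M_b r / Mhat_b r + (- (M_f r / ((r + 1/10) * Mhat_f r))) * (r + 1/10) = Mhat r"
    using eventually_gt_at_top[of 0] by eventually_elim (simp add: Mhat_def)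
  ultimately show ?thesis
    by (simp add: filterlim_cong)
qed

theorem theorem2:
  shows "\<exists>r0 > 0. \<forall>r > r0. Mhat r \<noteq> 0"
proof -
  have "\<forall>\<^sub>F r in at_top. 0 < Mhat r"
    using Mhat_at_top by (simp add: filterlim_at_top_dense)
  then obtain N where "\<And>r. N < r \<Longrightarrow> 0 < Mhat r"
    by (auto simp: eventually_at_top_dense)
  then show ?thesis
    by (intro exI[of _ "max 1 N"]) force
qed

end
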